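(* Let $\varphi\colon\mathcal{M}\to\mathcal{X}$ be a continuous surjective map from a Hausdorff, second-countable, locally compact topological space $\mathcal{M}$ to a metric space $(\mathcal{X},\mathrm{dist})$, let $y\in\mathcal{M}$ and $x=\varphi(y)$. The following are equivalent: (i) $\varphi$ is open at $y$; (ii) $\varphi$ is approximately open at $y$; (iii) $\varphi$ satisfies the Subsequence Lifting Property at $y$; (iv) $\varphi$ satisfies the Approximate Subsequence Lifting Property at $y$; (v) $\varphi$ satisfies "local $\Rightarrow$ local" at $y$.
   Context: (i) Open at $y$: $\varphi(U)$ is a neighborhood of $x$ in $\mathcal{X}$ for every neighborhood $U$ of $y$. (ii) Approximately open at $y$: the closure $\overline{\varphi(U)}$ is a neighborhood of $x$ for every neighborhood $U$ of $y$. (iii) SLP at $y$: for every sequence $(x_i)\subseteq\mathcal{X}$ converging to $x$ there exist a subsequence $(x_{i_j})$ and a sequence $(y_{i_j})\subseteq\mathcal{M}$ converging to $y$ with $\varphi(y_{i_j})=x_{i_j}$ for all $j$. (iv) ASLP at $y$: for every sequence $(x_i)\subseteq\mathcal{X}$ converging to $x$ and every sequence $(\epsilon_i)\subseteq\mathbb{R}_{>0}$ converging to $0$ there exist a subsequence indexed by $(i_j)$ and a sequence $(y_{i_j})\subseteq\mathcal{M}$ converging to $y$ with $\mathrm{dist}(\varphi(y_{i_j}),x_{i_j})\le\epsilon_{i_j}$ for all $j$. (v) "local $\Rightarrow$ local" at $y$: for every continuous $f\colon\mathcal{X}\to\mathbb{R}$, if $y$ is a local minimum of $f\circ\varphi$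 on $\mathcal{M}$ then $x$ is a local minimum of $f$ on $\mathcal{X}$. A neighborhood of a point is a set containing it in its interior. *)

theory Defs
  imports "HOL-Analysis.Analysis"
begin

definition open_at :: "('m::topological_space \<Rightarrow> 'x::metric_space) \<Rightarrow> 'm \<Rightarrow> bool" where
  "open_at \<phi> y \<longleftrightarrow> (\<forall>U. y \<in> interior U \<longrightarrow> \<phi> y \<in> interior (\<phi> ` U))"

definition approx_open_at :: "('m::topological_space \<Rightarrow> 'x::metric_space) \<Rightarrow> 'm \<Rightarrow> bool" where
  "approx_open_at \<phi> y \<longleftrightarrow> (\<forall>U. y \<in> interior U \<longrightarrow> \<phi> y \<in> interior (closure (\<phi> ` U)))"

definition SLP_at :: "('m::topological_space \<Rightarrow> 'x::metric_space) \<Rightarrow> 'm \<Rightarrow> bool" where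
  "SLP_at \<phi> y \<longleftrightarrow>
     (\<forall>xs::nat \<Rightarrow> 'x. xs \<longlonglongrightarrow> \<phi> y \<longrightarrow>
        (\<exists>r::nat \<Rightarrow> nat. \<exists>ys::nat \<Rightarrow> 'm. strict_mono r \<and> ys \<longlonglongrightarrow> y \<and>
            (\<forall>j. \<phi> (ys j) = xs (r j))))"

text \<open>ys j plays the role of y_{i_j}.\<close>
definition ASLP_at :: "('m::topological_space \<Rightarrow> 'x::metric_space) \<Rightarrow> 'm \<Rightarrow> bool" where
  "ASLP_at \<phi> y \<longleftrightarrow>
     (\<forall>(xs::nat \<Rightarrow> 'x) (eps::nat \<Rightarrow> real).
        xs \<longlonglongrightarrow> \<phi> y \<longrightarrow> (\<forall>i. eps i > 0) \<longrightarrow> eps \<longlonglongrightarrow> 0 \<longrightarrow>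
        (\<exists>r::nat \<Rightarrow> nat. \<exists>ys::nat \<Rightarrow> 'm. strict_mono r \<and> ys \<longlonglongrightarrow> y \<and>
            (\<forall>j. dist (\<phi> (ys j)) (xs (r j)) \<le> eps (r j))))"

definition local_min_at :: "('a::topological_space \<Rightarrow> real) \<Rightarrow> 'a \<Rightarrow> bool" where
  "local_min_at g p \<longleftrightarrow> (\<exists>U. open U \<and> p \<in> U \<and> (\<forall>z\<in>U. g p \<le> g z))"

definition local_to_local_at :: "('m::topological_space \<Rightarrow> 'x::metric_space) \<Rightarrow> 'm \<Rightarrow> bool" where
  "local_to_local_at \<phi> y \<longleftrightarrow>
     (\<forall>f::'x \<Rightarrow> real. continuous_on UNIV f \<longrightarrow>
        local_min_at (f \<circ> \<phi>) y \<longrightarrow> local_min_at f (\<phi> y))"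

end

theory Submission
  imports Defs
begin

text \<open>Local compactness makes the approximate notions exact: every neighbourhood \<open>U\<close> of \<open>y\<close>
  contains a compact neighbourhood \<open>K\<close>, whose image \<open>\<phi> ` K\<close> is closed. So approximate openness
  gives openness, and "local \<open>\<Rightarrow>\<close> local" gives openness by testing with
  \<open>f = - infdist \<cdot> (\<phi> ` K)\<close>, which is minimal (zero) on \<open>\<phi> ` K\<close> and nowhere else.
  Openness gives the subsequence lifting property by choosing preimages in a countable
  neighbourhood base at \<open>y\<close>, which trivially gives the approximate one. Conversely, if \<open>\<phi>\<close> is not
  approximately open, there are points \<open>x\<^sub>i \<rightarrow> \<phi> y\<close> and radii \<open>\<epsilon>\<^sub>i \<rightarrow> 0\<close> whose closed balls
  miss \<open>\<phi> ` U\<close>, and no approximate lifting of them can enter \<open>U\<close>.\<close>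

lemma Hausdorff_space_euclidean_t2: "Hausdorff_space (euclidean :: 'a::t2_space topology)"
  unfolding Hausdorff_space_def disjnt_def
  using hausdorff by (simp add: disjoint_iff) blast

lemma locally_compact_space_compact_neighbourhood:
  fixes y :: "'a::t2_space"
  assumes "locally_compact_space (euclidean :: 'a topology)" and "y \<in> interior U"
  obtains K where "compact K" "y \<in> interior K" "K \<subseteq> U"
proof -
  have "neighbourhood_base_of (compactin euclidean) (euclidean :: 'a topology)"
    using assms(1) locally_compact_space_neighbourhood_base Hausdorff_space_euclidean_t2 by blast
  moreover have "openin euclidean (interior U)"
    by simp
  ultimately have "\<exists>V K. openin euclidean V \<and> compactin euclidean K \<and> y \<in> V \<and> V \<subseteq> K
      \<and> K \<subseteq> interior U"
    using assms(2) unfolding neighbourhood_base_of by simp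
  then obtain V K where "open V" "compact K" "y \<in> V" "V \<subseteq> K" "K \<subseteq> interior U"
    by auto
  then show thesis
    using that[of K] interior_maximal[of V K] interior_subset[of U] by blast
qed

lemma strict_mono_above:
  fixes N :: "nat \<Rightarrow> nat"
  obtains r where "strict_mono r" "\<And>k. N k \<le> r k"
proof -
  define r where "r k = (\<Sum>j\<le>k. N j) + k" for k
  have "strict_mono r"
    unfolding r_def by (rule strict_monoI_Suc) simp
  moreover have "N k \<le> r k" for k
    unfolding r_def using member_le_sum[of k "{..k}" N] by simp
  ultimately show thesis
    using that by blast
qed

lemma cball_disjoint_if_notin_closure:
  fixes z :: "'a::metric_space"
  assumes "z \<notin> closure S" and "r > 0"
  obtains e where "0 < e" "e \<le> r" "cball z e \<inter> S = {}"
proof -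
  obtain d where d: "d > 0" "\<And>x. x \<in> S \<Longrightarrow> d \<le> dist x z"
    using assms(1) closure_approachable[of z S] by (meson not_le)
  have "cball z (min (d/2) r) \<inter> S = {}"
    using d by (force simp: dist_commute)
  then show thesis
    using that[of "min (d/2) r"] d(1) assms(2) by simp
qed

lemma cball_disjoint_seq_if_not_interior_closure:
  fixes a :: "'a::metric_space"
  assumes "a \<notin> interior (closure S)"
  obtains xs eps where "xs \<longlonglongrightarrow> a" "\<And>i. eps i > 0" "eps \<longlonglongrightarrow> 0"
    "\<And>i. cball (xs i) (eps i) \<inter> S = {}"
proof -
  have "\<exists>z e. dist z a < 1 / Suc i \<and> 0 < e \<and> e \<le> 1 / Suc i \<and> cball z e \<inter> S = {}" for i
  proof -
    have "\<not> ball a (1 / Suc i) \<subseteq> closure S"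
      using assms unfolding mem_interior by simp
    then obtain z where "z \<in> ball a (1 / Suc i)" "z \<notin> closure S"
      by blast
    moreover obtain e where "0 < e" "e \<le> 1 / Suc i" "cball z e \<inter> S = {}"
      using cball_disjoint_if_notin_closure[OF \<open>z \<notin> closure S\<close>, of "1 / Suc i"] by auto
    ultimately show ?thesis
      by (auto simp: dist_commute)
  qed
  then obtain xs eps where xe: "\<And>i. dist (xs i) a < 1 / Suc i" "\<And>i. eps i > 0"
    "\<And>i. eps i \<le> 1 / Suc i" "\<And>i. cball (xs i) (eps i) \<inter> S = {}"
    by metis
  have to0: "(\<lambda>i. 1 / real (Suc i)) \<longlonglongrightarrow> 0"
    using LIMSEQ_inverse_real_of_nat[unfolded inverse_eq_divide] .
  have "xs \<longlonglongrightarrow> a"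
    by (rule tendsto_dist_iff[THEN iffD2], rule tendsto_sandwich[OF _ _ tendsto_const to0])
       (use xe(1) in \<open>auto intro!: always_eventually less_imp_le\<close>)
  moreover have "eps \<longlonglongrightarrow> 0"
    by (rule tendsto_sandwich[OF _ _ tendsto_const to0])
       (use xe(2,3) in \<open>auto intro!: always_eventually less_imp_le\<close>)
  ultimately show thesis
    using that xe(2,4) by blast
qed

lemma local_min_at_neg_infdist_imp_interior:
  fixes S :: "'a::metric_space set"
  assumes "closed S" and "a \<in> S" and "local_min_at (\<lambda>w. - infdist w S) a"
  shows "a \<in> interior S"
proof -
  obtain W where W: "open W" "a \<in> W" "\<And>w. w \<in> W \<Longrightarrow> - infdist a S \<le> - infdist w S"
    using assms(3) unfolding local_min_at_def by blast
  have "W \<subseteq> S"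
  proof
    fix w assume "w \<in> W"
    then have "infdist w S \<le> 0"
      using W(3) assms(2) by fastforce
    then have "infdist w S = 0"
      by (meson antisym infdist_nonneg)
    then show "w \<in> S"
      using in_closed_iff_infdist_zero[OF assms(1)] assms(2) by blast
  qed
  then show ?thesis
    using W(1,2) interior_maximal by blast
qed

lemma open_at_imp_approx_open_at: "open_at \<phi> y \<Longrightarrow> approx_open_at \<phi> y"
  unfolding open_at_def approx_open_at_def
  by (meson closure_subset interior_mono subsetD)

lemma open_at_if_closed_image_neighbourhoods:
  fixes \<phi> :: "'m::t2_space \<Rightarrow> 'x::metric_space"
  assumes "locally_compact_space (euclidean :: 'm topology)" and "continuous_on UNIV \<phi>"
    and "\<And>K. y \<in> interior K \<Longrightarrow> closed (\<phi> ` K) \<Longrightarrow> \<phi> y \<in> interior (\<phi> ` K)"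
  shows "open_at \<phi> y"
  unfolding open_at_def
proof (intro allI impI)
  fix U assume "y \<in> interior U"
  then obtain K where K: "compact K" "y \<in> interior K" "K \<subseteq> U"
    using locally_compact_space_compact_neighbourhood assms(1) by blast
  have "compact (\<phi> ` K)"
    using K(1) assms(2) by (blast intro: compact_continuous_image continuous_on_subset)
  then have "\<phi> y \<in> interior (\<phi> ` K)"
    using assms(3) K(2) compact_imp_closed by blast
  then show "\<phi> y \<in> interior (\<phi> ` U)"
    using K(3) by (meson image_mono interior_mono subsetD)
qed

lemma approx_open_at_imp_open_at:
  fixes \<phi> :: "'m::t2_space \<Rightarrow> 'x::metric_space"
  assumes "locally_compact_space (euclidean :: 'm topology)" and "continuous_on UNIV \<phi>"
    and "approx_open_at \<phi> y"
  shows "open_at \<phi> y"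
  using assms(3) unfolding approx_open_at_def
  by (intro open_at_if_closed_image_neighbourhoods[OF assms(1,2)]) (metis closure_closed)

lemma open_at_imp_SLP_at:
  fixes \<phi> :: "'m::first_countable_topology \<Rightarrow> 'x::metric_space"
  assumes "open_at \<phi> y"
  shows "SLP_at \<phi> y"
  unfolding SLP_at_def
proof (intro allI impI)
  fix xs :: "nat \<Rightarrow> 'x" assume xs: "xs \<longlonglongrightarrow> \<phi> y"
  obtain A :: "nat \<Rightarrow> 'm set" where A: "\<And>k. open (A k)" "\<And>k. y \<in> A k"
    "\<And>F. (\<forall>k. F k \<in> A k) \<Longrightarrow> F \<longlonglongrightarrow> y"
    using first_countable_topology_class.countable_basis[of y] by blast
  have "\<exists>N. \<forall>i\<ge>N. xs i \<in> \<phi> ` A k" for k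
  proof -
    have "\<phi> y \<in> interior (\<phi> ` A k)"
      using assms A(1,2) unfolding open_at_def by (simp add: interior_open)
    then have "eventually (\<lambda>i. xs i \<in> interior (\<phi> ` A k)) sequentially"
      by (rule topological_tendstoD[OF xs open_interior])
    then show ?thesis
      unfolding eventually_sequentially using interior_subset by blast
  qed
  then obtain N where N: "\<And>k i. N k \<le> i \<Longrightarrow> xs i \<in> \<phi> ` A k"
    by metis
  obtain r where r: "strict_mono r" "\<And>k. N k \<le> r k"
    using strict_mono_above by blast
  have "\<forall>k. \<exists>z. z \<in> A k \<and> \<phi> z = xs (r k)"
    using N[OF r(2)] by (metis imageE)
  then obtain ys where ys: "\<And>k. ys k \<in> A k" "\<And>k. \<phi> (ys k) = xs (r k)"
    by metis
  have "ys \<longlonglongrightarrow> y"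
    using A(3) ys(1) by blast
  then show "\<exists>r ys. strict_mono r \<and> ys \<longlonglongrightarrow> y \<and> (\<forall>j. \<phi> (ys j) = xs (r j))"
    using r(1) ys(2) by blast
qed

lemma SLP_at_imp_ASLP_at: "SLP_at \<phi> y \<Longrightarrow> ASLP_at \<phi> y"
  unfolding SLP_at_def ASLP_at_def by (metis dist_self less_imp_le)

lemma ASLP_at_imp_approx_open_at:
  assumes "ASLP_at \<phi> y"
  shows "approx_open_at \<phi> y"
  unfolding approx_open_at_def
proof (intro allI impI; rule ccontr)
  fix U assume yU: "y \<in> interior U" and "\<phi> y \<notin> interior (closure (\<phi> ` U))"
  then obtain xs eps where "xs \<longlonglongrightarrow> \<phi> y" "\<And>i. eps i > 0" "eps \<longlonglongrightarrow> 0"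
    and miss: "\<And>i. cball (xs i) (eps i) \<inter> \<phi> ` U = {}"
    using cball_disjoint_seq_if_not_interior_closure by blast
  then obtain r ys where "ys \<longlonglongrightarrow> y" and near: "\<And>j. dist (\<phi> (ys j)) (xs (r j)) \<le> eps (r j)"
    using assms unfolding ASLP_at_def by blast
  then have "eventually (\<lambda>j. ys j \<in> interior U) sequentially"
    using yU topological_tendstoD open_interior by blast
  then obtain j where "ys j \<in> U"
    using interior_subset eventually_sequentially by (metis le_refl subsetD)
  moreover have "\<phi> (ys j) \<in> cball (xs (r j)) (eps (r j))"
    using near[of j] by (simp add: dist_commute)
  ultimately show False
    using miss[of "r j"] by blast
qed

lemma open_at_imp_local_to_local_at:
  fixes \<phi> :: "'m::topological_space \<Rightarrow> 'x::metric_space"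
  assumes "open_at \<phi> y"
  shows "local_to_local_at \<phi> y"
  unfolding local_to_local_at_def
proof (intro allI impI)
  fix f :: "'x \<Rightarrow> real" assume "local_min_at (f \<circ> \<phi>) y"
  then obtain V where V: "open V" "y \<in> V" "\<And>z. z \<in> V \<Longrightarrow> f (\<phi> y) \<le> f (\<phi> z)"
    unfolding local_min_at_def by auto
  have "\<phi> y \<in> interior (\<phi> ` V)"
    using assms V(1,2) unfolding open_at_def by (simp add: interior_open)
  moreover have "\<forall>w\<in>interior (\<phi> ` V). f (\<phi> y) \<le> f w"
    using V(3) interior_subset by blast
  ultimately show "local_min_at f (\<phi> y)"
    unfolding local_min_at_def by blast
qed

lemma local_to_local_at_imp_open_at:
  fixes \<phi> :: "'m::t2_space \<Rightarrow> 'x::metric_space"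
  assumes "locally_compact_space (euclidean :: 'm topology)" and "continuous_on UNIV \<phi>"
    and "local_to_local_at \<phi> y"
  shows "open_at \<phi> y"
proof (rule open_at_if_closed_image_neighbourhoods[OF assms(1,2)])
  fix K assume K: "y \<in> interior K" "closed (\<phi> ` K)"
  define f where "f w = - infdist w (\<phi> ` K)" for w
  have "(f \<circ> \<phi>) z = 0" if "z \<in> interior K" for z
    using that interior_subset by (force simp: f_def)
  then have "local_min_at (f \<circ> \<phi>) y"
    unfolding local_min_at_def using K(1) by (metis open_interior order_refl)
  moreover have "continuous_on UNIV f"
    unfolding f_def by (intro continuous_intros)
  ultimately have "local_min_at f (\<phi> y)"
    using assms(3) unfolding local_to_local_at_def by blast
  then show "\<phi> y \<in> interior (\<phi> ` K)"
    using local_min_at_neg_infdist_imp_interior K interior_subset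
    unfolding f_def by blast
qed

theorem theoremA2:
  fixes \<phi> :: "'m::{t2_space, second_countable_topology} \<Rightarrow> 'x::metric_space"
    and y :: 'm
  assumes "locally_compact_space (euclidean :: 'm topology)"
    and "continuous_on UNIV \<phi>"
    and "surj \<phi>"
  shows "(open_at \<phi> y \<longleftrightarrow> approx_open_at \<phi> y)
       \<and> (approx_open_at \<phi> y \<longleftrightarrow> SLP_at \<phi> y)
       \<and> (SLP_at \<phi> y \<longleftrightarrow> ASLP_at \<phi> y)
       \<and> (ASLP_at \<phi> y \<longleftrightarrow> local_to_local_at \<phi> y)"
  using open_at_imp_approx_open_at approx_open_at_imp_open_at[OF assms(1,2)]
    open_at_imp_SLP_at SLP_at_imp_ASLP_at ASLP_at_imp_approx_open_at
    open_at_imp_local_to_local_at local_to_local_at_imp_open_at[OF assms(1,2)]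
  by blast

end
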